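(* Suppose that $k \mid n$, and that $J$ is a $k$-system on $n$ vertices with $$\delta(J) \geq \left(n, (k-1)n/k, (k-2)n/k, \dots, n/k \right).$$ Then $J_k$ admits a fractional perfect matching.
   Context: A $k$-system is a hypergraph $J$ (identified with its edge set) with every edge of size at most $k$ and $\emptyset\in J$; $J_r$ is the $r$-graph of edges of size $r$. The degree $d(e)$ of an edge $e$ is the number of edges of size $|e|+1$ containing $e$; $\delta_r(J)$ is the minimum of $d(e)$ over edges of size $r$; $\delta(J)=(\delta_0(J),\dots,\delta_{k-1}(J))$, compared pointwise. A fractional perfect matching in a hypergraph $H$ is an assignment of weights $w_e\ge 0$ to the edges of $H$ such that for every vertex $v$, $\sum_{e\ni v} w_e=1$. *)

theory Defs
  imports "HOL-Analysis.Analysis"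
begin

definition k_system :: "'a set \<Rightarrow> nat \<Rightarrow> 'a set set \<Rightarrow> bool" where
  "k_system V k J \<longleftrightarrow> (\<forall>e\<in>J. e \<subseteq> V \<and> card e \<le> k) \<and> {} \<in> J"

definition layer :: "'a set set \<Rightarrow> nat \<Rightarrow> 'a set set" where
  "layer J r = {e \<in> J. card e = r}"

definition sys_deg :: "'a set set \<Rightarrow> 'a set \<Rightarrow> nat" where
  "sys_deg J e = card {f \<in> J. card f = card e + 1 \<and> e \<subseteq> f}"

text \<open>Minimum r-degree; taken as a lower-bound condition (min over edges of size r).\<close>
definition min_deg_ge :: "'a set set \<Rightarrow> nat \<Rightarrow> real \<Rightarrow> bool" where
  "min_deg_ge J r d \<longleftrightarrow> (\<forall>e\<in>layer J r. real (sys_deg J e) \<ge> d)"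

definition fractional_perfect_matching :: "'a set \<Rightarrow> 'a set set \<Rightarrow> ('a set \<Rightarrow> real) \<Rightarrow> bool" where
  "fractional_perfect_matching V H w \<longleftrightarrow>
     (\<forall>e\<in>H. w e \<ge> 0) \<and> (\<forall>v\<in>V. (\<Sum>e\<in>{e\<in>H. v \<in> e}. w e) = 1)"

end

theory Submission
  imports Defs
begin

text \<open>Write \<open>n = kq\<close>. For any weighting \<open>y\<close> of the vertices, list them in increasing
  order of \<open>y\<close> and build a \<open>k\<close>-edge greedily from \<open>\<emptyset>\<close>: the degree condition lets the
  \<open>(r+1)\<close>-st vertex be chosen among the last \<open>(k-r)q\<close> positions of the list, i.e. no heavier
  than the vertex at position \<open>rq\<close>. Hence some edge \<open>e\<close> satisfies \<open>q\<cdot>y(e) \<le> y(V)\<close>.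
  This is the dual (Farkas) condition for a fractional perfect matching, which we establish
  variationally: minimise \<open>\<Sum>\<^sub>v (1 - q \<Sum>\<^sub>e\<^sub>\<ni>\<^sub>v w\<^sub>e)\<^sup>2\<close> over probability weightings \<open>w\<close> of
  the edges. If the defects \<open>a\<^sub>v\<close> at the minimum do not all vanish, moving \<open>w\<close> towards
  any single edge \<open>e\<close> shows \<open>q\<cdot>a(e) \<le> a(V) - \<Sum>\<^sub>v a\<^sub>v\<^sup>2 < a(V)\<close>, contradicting the greedy
  bound for \<open>y = -a\<close>.\<close>

lemma exists_le_nth_if_card_ge:
  fixes L :: "'a list" and y :: "'a \<Rightarrow> real"
  assumes sorted: "sorted (map y L)" and m: "m < length L"
    and S: "S \<subseteq> set L" and card_S: "length L - m \<le> card S"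
  shows "\<exists>v\<in>S. y v \<le> y (L ! m)"
proof (rule ccontr)
  assume none: "\<not> ?thesis"
  have "S \<subseteq> (!) L ` {m+1..<length L}"
  proof
    fix v assume v: "v \<in> S"
    then obtain i where i: "i < length L" "v = L ! i"
      using S by (metis in_set_conv_nth subsetD)
    have "\<not> i \<le> m"
    proof
      assume "i \<le> m"
      then have "y v \<le> y (L ! m)"
        using sorted_nth_mono[OF sorted, of i m] i m by simp
      with none v show False by auto
    qed
    with i show "v \<in> (!) L ` {m+1..<length L}" by auto
  qed
  then have "card S \<le> card ((!) L ` {m+1..<length L})" by (intro card_mono) auto
  also have "\<dots> \<le> card {m+1..<length L}" by (rule card_image_le) simp
  finally show False using card_S m by simp
qed

lemma sum_block_heads_le:
  fixes L :: "'a list" and y :: "'a \<Rightarrow> real"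
  assumes sorted: "sorted (map y L)" and len: "length L = k * q"
  shows "real q * (\<Sum>i<k. y (L ! (i*q))) \<le> (\<Sum>j<k*q. y (L ! j))"
proof -
  have "real q * (\<Sum>i<k. y (L ! (i*q))) = (\<Sum>i<k. \<Sum>j\<in>{i*q..<i*q+q}. y (L ! (i*q)))"
    by (simp add: sum_distrib_left)
  also have "\<dots> \<le> (\<Sum>i<k. \<Sum>j\<in>{i*q..<i*q+q}. y (L ! j))"
  proof (intro sum_mono)
    fix i j assume i: "i \<in> {..<k}" and j: "j \<in> {i*q..<i*q+q}"
    have "i*q + q \<le> k*q" using i by (metis lessThan_iff add.commute mult_Suc Suc_leI mult_le_mono1)
    with j len have "j < length L" by simp
    then show "y (L ! (i*q)) \<le> y (L ! j)"
      using sorted_nth_mono[OF sorted, of "i*q" j] j by simp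
  qed
  also have "\<dots> = (\<Sum>j<k*q. y (L ! j))" by (rule sum.nat_group)
  finally show ?thesis .
qed

lemma insert_the_elem_Diff:
  assumes "e \<subseteq> f" "finite f" "card f = card e + 1"
  shows "f = insert (the_elem (f - e)) e" "the_elem (f - e) \<notin> e"
proof -
  have "card (f - e) = 1"
    using assms card_Diff_subset[of e f] finite_subset by fastforce
  then obtain x where "f - e = {x}" by (rule card_1_singletonE)
  with assms(1) show "f = insert (the_elem (f - e)) e" "the_elem (f - e) \<notin> e" by auto
qed

lemma exists_light_extension:
  fixes J :: "'a set set" and y :: "'a \<Rightarrow> real"
  assumes edges: "\<forall>f\<in>J. f \<subseteq> set L"
    and sorted: "sorted (map y L)" and m: "m < length L"
    and e: "e \<in> layer J r" and deg: "length L - m \<le> sys_deg J e"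
  shows "\<exists>f\<in>layer J (Suc r). sum y f \<le> sum y e + y (L ! m)"
proof -
  define F where "F = {f \<in> J. card f = card e + 1 \<and> e \<subseteq> f}"
  define g where "g f = the_elem (f - e)" for f
  have ext: "f = insert (g f) e" "g f \<notin> e" "f \<subseteq> set L" if "f \<in> F" for f
  proof -
    from that have "f \<in> J" "e \<subseteq> f" "card f = card e + 1" by (auto simp: F_def)
    moreover from \<open>f \<in> J\<close> edges have "f \<subseteq> set L" by blast
    ultimately show "f = insert (g f) e" "g f \<notin> e" "f \<subseteq> set L"
      using insert_the_elem_Diff[of e f] finite_subset[of f "set L"] by (simp_all add: g_def)
  qed
  have "inj_on g F" by (rule inj_onI) (metis ext(1))
  then have "length L - m \<le> card (g ` F)"
    using deg by (simp add: card_image sys_deg_def F_def)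
  moreover have "g ` F \<subseteq> set L"
  proof
    fix x assume "x \<in> g ` F"
    then obtain f where "f \<in> F" "x = g f" by blast
    with ext[OF \<open>f \<in> F\<close>] show "x \<in> set L" by blast
  qed
  ultimately obtain f where f: "f \<in> F" "y (g f) \<le> y (L ! m)"
    using exists_le_nth_if_card_ge[OF sorted m] by blast
  have "finite e" using ext(1,3)[OF f(1)] finite_subset by (metis List.finite_set finite_insert)
  then have "sum y f = y (g f) + sum y e" using ext[OF f(1)] by (metis sum.insert)
  moreover have "f \<in> layer J (Suc r)" using f(1) e unfolding F_def layer_def by auto
  ultimately show ?thesis using f(2) by (intro bexI[of _ f]) auto
qed

lemma exists_light_top_edge:
  fixes J :: "'a set set" and y :: "'a \<Rightarrow> real"
  assumes "finite V" and card_V: "card V = k * q" and "q > 0"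
    and sys: "k_system V k J"
    and deg: "\<forall>r<k. \<forall>e\<in>layer J r. (k - r) * q \<le> sys_deg J e"
  shows "\<exists>e\<in>layer J k. real q * sum y e \<le> sum y V"
proof -
  obtain xs where xs: "distinct xs" "set xs = V"
    using finite_distinct_list[OF \<open>finite V\<close>] by blast
  define L where "L = sort_key y xs"
  have L: "distinct L" "set L = V" "sorted (map y L)" "length L = k * q"
    using xs card_V distinct_card[of L] by (auto simp: L_def)
  have edges: "\<forall>f\<in>J. f \<subseteq> set L" using sys L(2) by (simp add: k_system_def)
  have "\<exists>e\<in>layer J r. sum y e \<le> (\<Sum>i<r. y (L ! (i*q)))" if "r \<le> k" for r
    using that
  proof (induction r)
    case 0
    have "{} \<in> layer J 0" using sys by (simp add: k_system_def layer_def)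
    then show ?case by force
  next
    case (Suc r)
    then obtain e where e: "e \<in> layer J r" "sum y e \<le> (\<Sum>i<r. y (L ! (i*q)))" by auto
    have "r*q < length L" using Suc.prems \<open>q > 0\<close> L(4) by simp
    moreover have "length L - r*q \<le> sys_deg J e"
      using deg Suc.prems e(1) L(4) by (simp add: diff_mult_distrib)
    ultimately obtain f where "f \<in> layer J (Suc r)" "sum y f \<le> sum y e + y (L ! (r*q))"
      using exists_light_extension[OF edges L(3) _ e(1)] by blast
    with e(2) show ?case by (intro bexI[of _ f]) auto
  qed
  then obtain e where e: "e \<in> layer J k" "sum y e \<le> (\<Sum>i<k. y (L ! (i*q)))" by blast
  have "real q * sum y e \<le> real q * (\<Sum>i<k. y (L ! (i*q)))"
    using e(2) by (simp add: mult_left_mono)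
  also have "\<dots> \<le> (\<Sum>j<k*q. y (L ! j))" by (rule sum_block_heads_le[OF L(3,4)])
  also have "\<dots> = sum y V"
    using sum_list_distinct_conv_sum_set[OF L(1), of y] L
    by (simp add: sum_list_sum_nth atLeast0LessThan)
  finally show ?thesis using e(1) by blast
qed

text \<open>The redundant bound \<open>w e \<le> 1\<close> exhibits the simplex as a closed subset of a product
  of compact intervals.\<close>

definition weight_simplex :: "'b set \<Rightarrow> ('b \<Rightarrow> real) set" where
  "weight_simplex E = {w. (\<forall>e. w e \<in> (if e \<in> E then {0..1} else {0})) \<and> sum w E = 1}"

definition cover_defect :: "real \<Rightarrow> 'a set set \<Rightarrow> ('a set \<Rightarrow> real) \<Rightarrow> 'a \<Rightarrow> real" where
  "cover_defect q E w v = 1 - q * (\<Sum>e\<in>{e\<in>E. v \<in> e}. w e)"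

lemma compact_weight_simplex: "compact (weight_simplex E)"
proof -
  let ?S = "\<lambda>e. if e \<in> E then {0..1::real} else {0}"
  have "compactin (product_topology (\<lambda>_. euclidean) UNIV) (PiE UNIV ?S)"
    by (subst compactin_PiE) auto
  then have "compact (PiE UNIV ?S)" by (simp add: euclidean_product_topology)
  moreover have "continuous_on UNIV (\<lambda>w :: _ \<Rightarrow> real. sum w E)"
    by (intro continuous_intros continuous_on_product_coordinates)
  then have "closed {w :: _ \<Rightarrow> real. sum w E = 1}"
    using closed_Collect_eq[OF _ continuous_on_const] by simp
  moreover have "weight_simplex E = PiE UNIV ?S \<inter> {w. sum w E = 1}"
    unfolding weight_simplex_def
    by (auto simp: PiE_UNIV_domain Pi_iff split: if_splits; metis atLeastAtMost_iff singletonD)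
  ultimately show ?thesis by (simp add: compact_Int_closed)
qed

lemma continuous_on_sum_sq_cover_defect:
  "continuous_on S (\<lambda>w. \<Sum>v\<in>V. (cover_defect q E w v)\<^sup>2)"
  unfolding cover_defect_def
  by (intro continuous_intros continuous_on_subset[OF continuous_on_product_coordinates]) auto

lemma mem_weight_simplexD:
  assumes "w \<in> weight_simplex E"
  shows "e \<in> E \<Longrightarrow> 0 \<le> w e" "e \<in> E \<Longrightarrow> w e \<le> 1" "e \<notin> E \<Longrightarrow> w e = 0"
    and "sum w E = 1"
proof -
  have "w e \<in> (if e \<in> E then {0..1} else {0})" "sum w E = 1"
    using assms by (simp_all add: weight_simplex_def)
  then show "e \<in> E \<Longrightarrow> 0 \<le> w e" "e \<in> E \<Longrightarrow> w e \<le> 1" "e \<notin> E \<Longrightarrow> w e = 0"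
    and "sum w E = 1" by simp_all
qed

lemma weight_simplex_towards_vertex:
  assumes "finite E" "e0 \<in> E" and w: "w \<in> weight_simplex E" and "0 \<le> t" "t \<le> 1"
  shows "(\<lambda>e. (1-t) * w e + t * (if e = e0 then 1 else 0)) \<in> weight_simplex E"
  unfolding weight_simplex_def
proof (intro CollectI conjI allI)
  fix e
  show "(1-t) * w e + t * (if e = e0 then 1 else 0) \<in> (if e \<in> E then {0..1} else {0})"
  proof (cases "e \<in> E")
    case True
    then have "0 \<le> (1-t) * w e" "(1-t) * w e \<le> 1 - t"
      using mem_weight_simplexD(1,2)[OF w] \<open>0 \<le> t\<close> \<open>t \<le> 1\<close>
      by (simp_all add: mult_left_le)
    with True \<open>0 \<le> t\<close> show ?thesis by auto
  next
    case False
    with mem_weight_simplexD(3)[OF w] \<open>e0 \<in> E\<close> show ?thesis by auto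
  qed
  have "(\<Sum>e\<in>E. t * (if e = e0 then 1 else 0)) = t"
    using assms(1,2) by (simp add: sum.delta flip: sum_distrib_left)
  then show "(\<Sum>e\<in>E. (1-t) * w e + t * (if e = e0 then 1 else 0)) = 1"
    using mem_weight_simplexD(4)[OF w] by (simp add: sum.distrib flip: sum_distrib_left)
qed

lemma cover_defect_towards_vertex:
  assumes "finite E" "e0 \<in> E"
  shows "cover_defect q E (\<lambda>e. (1-t) * w e + t * (if e = e0 then 1 else 0)) v
    = cover_defect q E w v + t * ((1 - cover_defect q E w v) - q * (if v \<in> e0 then 1 else 0))"
proof -
  let ?S = "{e\<in>E. v \<in> e}"
  have "(\<Sum>e\<in>?S. t * (if e = e0 then 1 else 0)) = t * (if v \<in> e0 then 1 else 0)"
    using assms by (simp add: sum.delta flip: sum_distrib_left)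
  then have sum_eq: "(\<Sum>e\<in>?S. (1-t) * w e + t * (if e = e0 then 1 else 0))
      = (1-t) * (\<Sum>e\<in>?S. w e) + t * (if v \<in> e0 then 1 else 0)"
    by (simp add: sum.distrib flip: sum_distrib_left)
  show ?thesis unfolding cover_defect_def sum_eq by (simp add: algebra_simps)
qed

lemma nonneg_if_quadratic_nonneg_near_zero:
  fixes X B :: real
  assumes "B \<ge> 0" and quadratic: "\<And>t. 0 < t \<Longrightarrow> t \<le> 1 \<Longrightarrow> 0 \<le> 2*t*X + t\<^sup>2*B"
  shows "X \<ge> 0"
proof (rule ccontr)
  assume "\<not> X \<ge> 0"
  define t where "t = min 1 (-X / (B+1))"
  have "X / (B+1) < 0" using \<open>\<not> X \<ge> 0\<close> \<open>B \<ge> 0\<close> by (simp add: divide_neg_pos)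
  then have t: "0 < t" "t \<le> 1" by (auto simp: t_def)
  have "t * B \<le> (-X / (B+1)) * B" using \<open>B \<ge> 0\<close> by (intro mult_right_mono) (simp_all add: t_def)
  also have "\<dots> < -X" using \<open>\<not> X \<ge> 0\<close> \<open>B \<ge> 0\<close> by (simp add: field_simps)
  finally have "t * B < -X" .
  have "0 \<le> t * (2*X + t*B)"
    using quadratic[OF t] by (simp add: power2_eq_square algebra_simps)
  then have "0 \<le> 2*X + t*B" using t by (simp add: zero_le_mult_iff)
  with \<open>t * B < -X\<close> \<open>\<not> X \<ge> 0\<close> show False by linarith
qed

text \<open>First-order optimality of the least-squares weighting \<open>ws\<close> in the direction of the
  vertex \<open>e0\<close> of the simplex.\<close>

lemma cover_defect_minimizer_bound:
  fixes V :: "'a set" and E :: "'a set set" and q :: real and ws :: "'a set \<Rightarrow> real"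
  defines "a \<equiv> cover_defect q E ws"
  assumes "finite V" "finite E" "e0 \<in> E" "e0 \<subseteq> V" and ws: "ws \<in> weight_simplex E"
    and min: "\<And>w. w \<in> weight_simplex E \<Longrightarrow>
      (\<Sum>v\<in>V. (a v)\<^sup>2) \<le> (\<Sum>v\<in>V. (cover_defect q E w v)\<^sup>2)"
  shows "q * sum a e0 \<le> sum a V - (\<Sum>v\<in>V. (a v)\<^sup>2)"
proof -
  define d where "d v = (1 - a v) - q * (if v \<in> e0 then 1 else 0)" for v
  define X where "X = (\<Sum>v\<in>V. a v * d v)"
  define B where "B = (\<Sum>v\<in>V. (d v)\<^sup>2)"
  have "B \<ge> 0" unfolding B_def by (intro sum_nonneg) simp
  moreover have "0 \<le> 2*t*X + t\<^sup>2 * B" if "0 < t" "t \<le> 1" for t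
  proof -
    have "cover_defect q E (\<lambda>e. (1-t) * ws e + t * (if e = e0 then 1 else 0)) v = a v + t * d v"
      for v unfolding a_def d_def by (rule cover_defect_towards_vertex[OF \<open>finite E\<close> \<open>e0 \<in> E\<close>])
    then have "(\<Sum>v\<in>V. (a v)\<^sup>2) \<le> (\<Sum>v\<in>V. (a v + t * d v)\<^sup>2)"
      using min[OF weight_simplex_towards_vertex[OF \<open>finite E\<close> \<open>e0 \<in> E\<close> ws, of t]] that
      by simp
    also have "\<dots> = (\<Sum>v\<in>V. (a v)\<^sup>2 + 2*t*(a v * d v) + t\<^sup>2 * (d v)\<^sup>2)"
      by (rule sum.cong) (simp_all add: power2_eq_square algebra_simps)
    also have "\<dots> = (\<Sum>v\<in>V. (a v)\<^sup>2) + 2*t*X + t\<^sup>2 * B"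
      by (simp add: X_def B_def sum.distrib sum_distrib_left)
    finally show ?thesis by simp
  qed
  ultimately have "X \<ge> 0" by (rule nonneg_if_quadratic_nonneg_near_zero)
  have "X = (\<Sum>v\<in>V. (a v - (a v)\<^sup>2) - q * (if v \<in> e0 then a v else 0))"
    unfolding X_def d_def by (rule sum.cong) (simp_all add: power2_eq_square algebra_simps)
  also have "\<dots> = sum a V - (\<Sum>v\<in>V. (a v)\<^sup>2) - q * (\<Sum>v\<in>V. if v \<in> e0 then a v else 0)"
    by (simp add: sum_subtractf sum_distrib_left)
  also have "(\<Sum>v\<in>V. if v \<in> e0 then a v else 0) = sum a e0"
    using sum.inter_restrict[OF \<open>finite V\<close>, of a e0] \<open>e0 \<subseteq> V\<close> by (simp add: Int_absorb1)
  finally show ?thesis using \<open>X \<ge> 0\<close> by simp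
qed

lemma fractional_perfect_matching_if_light_edges:
  fixes V :: "'a set" and E :: "'a set set" and q :: real
  assumes "finite V" and edges: "\<forall>e\<in>E. e \<subseteq> V" and "q \<ge> 0"
    and light: "\<And>y :: 'a \<Rightarrow> real. \<exists>e\<in>E. q * sum y e \<le> sum y V"
  shows "\<exists>w. fractional_perfect_matching V E w"
proof -
  have "finite E" using edges \<open>finite V\<close> by (meson finite_Pow_iff finite_subset PowI subsetI)
  obtain e0 where "e0 \<in> E" using light[of "\<lambda>_. 0"] by blast
  then have "(\<lambda>e. if e = e0 then 1 else 0) \<in> weight_simplex E"
    using \<open>finite E\<close> by (auto simp: weight_simplex_def sum.delta)
  then obtain ws where ws: "ws \<in> weight_simplex E"
    and min: "\<And>w. w \<in> weight_simplex E \<Longrightarrow>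
      (\<Sum>v\<in>V. (cover_defect q E ws v)\<^sup>2) \<le> (\<Sum>v\<in>V. (cover_defect q E w v)\<^sup>2)"
    using continuous_attains_inf[OF compact_weight_simplex _ continuous_on_sum_sq_cover_defect]
    by blast
  define a where "a = cover_defect q E ws"
  show ?thesis
  proof (cases "\<forall>v\<in>V. a v = 0")
    case True
    then have "fractional_perfect_matching V E (\<lambda>e. q * ws e)"
      using mem_weight_simplexD(1)[OF ws] \<open>q \<ge> 0\<close>
      by (auto simp: fractional_perfect_matching_def a_def cover_defect_def sum_distrib_left)
    then show ?thesis by blast
  next
    case False
    then obtain v0 where "v0 \<in> V" "a v0 \<noteq> 0" by blast
    then have "0 < (\<Sum>v\<in>V. (a v)\<^sup>2)" by (intro sum_pos2[OF \<open>finite V\<close>]) auto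
    obtain e where e: "e \<in> E" "q * sum (\<lambda>v. - a v) e \<le> sum (\<lambda>v. - a v) V"
      using light by blast
    then have "sum a V \<le> q * sum a e" by (simp add: sum_negf)
    moreover have "q * sum a e \<le> sum a V - (\<Sum>v\<in>V. (a v)\<^sup>2)"
      unfolding a_def
      by (rule cover_defect_minimizer_bound[OF \<open>finite V\<close> \<open>finite E\<close> e(1) _ ws min])
        (use edges e(1) in blast)
    ultimately show ?thesis using \<open>0 < (\<Sum>v\<in>V. (a v)\<^sup>2)\<close> by linarith
  qed
qed

theorem lemma3p6:
  fixes V :: "'a set" and J :: "'a set set" and k n :: nat
  assumes "finite V" and "card V = n"
    and "k dvd n"
    and "k_system V k J"
    and "\<forall>r<k. min_deg_ge J r (real (k - r) * real n / real k)"
  shows "\<exists>w. fractional_perfect_matching V (layer J k) w"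
proof (cases "n = 0")
  case True
  then have "V = {}" using assms(1,2) by simp
  then show ?thesis by (auto simp: fractional_perfect_matching_def)
next
  case False
  obtain q where n: "n = k * q" using \<open>k dvd n\<close> by blast
  with False have "k > 0" "q > 0" by auto
  have "(k - r) * q \<le> sys_deg J e" if "r < k" "e \<in> layer J r" for r e
  proof -
    have "real (k - r) * real n / real k = real ((k - r) * q)" using n \<open>k > 0\<close> by simp
    then show ?thesis using assms(5) that unfolding min_deg_ge_def by (metis of_nat_le_iff)
  qed
  then have "\<exists>e\<in>layer J k. real q * sum y e \<le> sum y V" for y
    using exists_light_top_edge[OF \<open>finite V\<close> _ \<open>q > 0\<close> \<open>k_system V k J\<close>] assms(2) n by blast
  moreover have "\<forall>e\<in>layer J k. e \<subseteq> V" using \<open>k_system V k J\<close> by (simp add: k_system_def layer_def)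
  ultimately show ?thesis
    by (intro fractional_perfect_matching_if_light_edges[OF \<open>finite V\<close>, of _ "real q"]) auto
qed

end
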